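(* Let $P$ be a finite set of $m$ points in the plane, $\mathcal{R}$ a finite family of axis-aligned rectangles, $k\ge1$ an integer and $\alpha$ an integer with $1\le\alpha\le k$. Let $m^*$ be the maximum number of points of $P$ that can be exposed by deleting $k$ rectangles from $\mathcal{R}$, and let $m'$ be the value returned by the algorithm Greedy-Bicriteria with parameter $\alpha$. Then there is an absolute constant $c>0$ such that $m'\ge \alpha m^*/(ck^2)$; moreover the algorithm deletes at most $\alpha k$ rectangles, and the $m'$ points counted are exposed after these deletions.
   Context: A point $p$ is exposed with respect to a family $\mathcal{R}'$ of ranges if it lies in no range of $\mathcal{R}'$. For $p\in P$, $\mathcal{R}(p)$ denotes the set of rectangles in $\mathcal{R}$ containing $p$. Algorithm Greedy-Bicriteria: first discard all points $p$ with $|\mathcal{R}(p)|>k$. Partition the remaining points into groups (equivalence classes) $G_1,G_2,\dots$, where two points $p,p'$ lie in the same group iff $\mathcal{R}(p)=\mathcal{R}(p')$. Sort the groups so that $|G_1|\ge|G_2|\ge\cdots$, delete all rectangles containing the points of the first $\alpha$ groups, and return $m'=\sum_{1\le i\le\alpha}|G_i|$ as the number of exposed points. *)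

theory Defs
  imports Main "HOL-Library.Product_Plus" Complex_Main
begin

type_synonym pt = "real \<times> real"

definition axis_rect :: "pt set \<Rightarrow> bool" where
  "axis_rect S \<longleftrightarrow> (\<exists>a b c d. a \<le> b \<and> c \<le> d \<and> S = {a..b} \<times> {c..d})"

definition ranges_at :: "pt set set \<Rightarrow> pt \<Rightarrow> pt set set" where
  "ranges_at R p = {r \<in> R. p \<in> r}"

definition exposed :: "pt set set \<Rightarrow> pt \<Rightarrow> bool" where
  "exposed R' p \<longleftrightarrow> (\<forall>r\<in>R'. p \<notin> r)"

definition max_exposed :: "pt set set \<Rightarrow> pt set \<Rightarrow> nat \<Rightarrow> nat" where
  "max_exposed R P k = Max {card {p \<in> P. exposed (R - D) p} | D. D \<subseteq> R \<and> card D \<le> k}"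

definition surviving :: "pt set set \<Rightarrow> pt set \<Rightarrow> nat \<Rightarrow> pt set" where
  "surviving R P k = {p \<in> P. card (ranges_at R p) \<le> k}"

definition groups :: "pt set set \<Rightarrow> pt set \<Rightarrow> nat \<Rightarrow> pt set set" where
  "groups R P k = (\<lambda>p. {q \<in> surviving R P k. ranges_at R q = ranges_at R p}) ` surviving R P k"

text \<open>Gs is a possible choice of the first alpha groups in some order of
  non-increasing size (all of them if there are fewer than alpha).\<close>
definition greedy_choice :: "pt set set \<Rightarrow> pt set \<Rightarrow> nat \<Rightarrow> nat \<Rightarrow> pt set set \<Rightarrow> bool" where
  "greedy_choice R P k \<alpha> Gs \<longleftrightarrow>
     Gs \<subseteq> groups R P k \<and> card Gs = min \<alpha> (card (groups R P k)) \<and>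
     (\<forall>G\<in>Gs. \<forall>H\<in>groups R P k - Gs. card H \<le> card G)"

definition greedy_deleted :: "pt set set \<Rightarrow> pt set set \<Rightarrow> pt set set" where
  "greedy_deleted R Gs = (\<Union>G\<in>Gs. \<Union>p\<in>G. ranges_at R p)"

definition greedy_value :: "pt set set \<Rightarrow> nat" where
  "greedy_value Gs = (\<Sum>G\<in>Gs. card G)"

end

theory Submission
  imports Defs
begin

(* Let D be an optimal set of at most k deleted rectangles and E the points it exposes. Every
   p in E has R(p) = {r in D. p in r}, so p survives the pruning and its group is determined by
   the cell of p in the arrangement of D. The edges of |D| rectangles cut the plane into at most
   (4|D| + 1)^2 cells, so E is covered by N <= (4k + 1)^2 groups. Of these, the groups chosen
   by the greedy step contribute at most m', and every other one is no larger than each of the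
   alpha chosen groups, hence at most m'/alpha; thus alpha |E| <= (alpha + N) m'. *)

(* Membership of x in an interval with endpoints in X depends only on this pair. *)
definition cut_position :: "'a::linorder set \<Rightarrow> 'a \<Rightarrow> 'a set \<times> 'a set" where
  "cut_position X x = ({t\<in>X. t < x}, {t\<in>X. t \<le> x})"

lemma cut_position_eq_if_card_eq:
  assumes "finite X" "x \<le> y"
    and "card (fst (cut_position X x)) + card (snd (cut_position X x)) =
         card (fst (cut_position X y)) + card (snd (cut_position X y))"
  shows "cut_position X x = cut_position X y"
proof -
  have sub: "{t\<in>X. t < x} \<subseteq> {t\<in>X. t < y}" "{t\<in>X. t \<le> x} \<subseteq> {t\<in>X. t \<le> y}"
    using \<open>x \<le> y\<close> by auto
  have fin: "finite {t\<in>X. t < y}" "finite {t\<in>X. t \<le> y}"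
    using \<open>finite X\<close> by auto
  have "card {t\<in>X. t < x} \<le> card {t\<in>X. t < y}" "card {t\<in>X. t \<le> x} \<le> card {t\<in>X. t \<le> y}"
    using sub fin by (auto intro: card_mono)
  with assms(3) have "card {t\<in>X. t < x} = card {t\<in>X. t < y}" "card {t\<in>X. t \<le> x} = card {t\<in>X. t \<le> y}"
    unfolding cut_position_def by auto
  with sub fin show ?thesis
    unfolding cut_position_def by (metis (no_types, lifting) card_subset_eq)
qed

lemma card_range_cut_position:
  assumes "finite X"
  shows "card (range (cut_position X)) \<le> 2 * card X + 1"
proof -
  define total :: "'a set \<times> 'a set \<Rightarrow> nat" where "total = (\<lambda>(L, L'). card L + card L')"
  \<comment> \<open>both components grow with x, so a cut is determined by its total size\<close>
  have inj: "inj_on total (range (cut_position X))"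
  proof (rule inj_onI)
    fix u v assume "u \<in> range (cut_position X)" "v \<in> range (cut_position X)" "total u = total v"
    then obtain x y where u: "u = cut_position X x" and v: "v = cut_position X y"
      and eq: "card (fst u) + card (snd u) = card (fst v) + card (snd v)"
      by (auto simp: total_def case_prod_beta)
    have "x \<le> y \<or> y \<le> x" by (rule linear)
    then show "u = v"
      unfolding u v
    proof
      assume "x \<le> y"
      then show "cut_position X x = cut_position X y"
        by (rule cut_position_eq_if_card_eq[OF assms _ eq[unfolded u v]])
    next
      assume "y \<le> x"
      then show "cut_position X x = cut_position X y"
        by (rule cut_position_eq_if_card_eq[OF assms _ eq[unfolded u v, symmetric], symmetric])
    qed
  qed
  have "total (cut_position X x) \<le> 2 * card X" for x
  proof -
    have "card {t\<in>X. t < x} \<le> card X" "card {t\<in>X. t \<le> x} \<le> card X"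
      using assms by (auto intro: card_mono)
    then show ?thesis by (simp add: total_def cut_position_def)
  qed
  then have "total ` range (cut_position X) \<subseteq> {0..2 * card X}"
    by auto
  then have "card (range (cut_position X)) \<le> card {0..2 * card X}"
    using card_image[OF inj] card_mono[of "{0..2 * card X}"] by (metis finite_atLeastAtMost)
  then show ?thesis by simp
qed

lemma finite_range_cut_position: "finite X \<Longrightarrow> finite (range (cut_position X))"
  by (rule finite_subset[of _ "Pow X \<times> Pow X"]) (auto simp: cut_position_def)

lemma card_interval_cells:
  fixes a b :: "'i \<Rightarrow> 'a::linorder"
  assumes "finite D"
  shows "card (range (\<lambda>x. {i\<in>D. x \<in> {a i..b i}})) \<le> 4 * card D + 1"
proof -
  define X where "X = a ` D \<union> b ` D"
  have "finite X"
    unfolding X_def using assms by simp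
  have card_X: "card X \<le> 2 * card D"
    unfolding X_def using card_Un_le[of "a ` D" "b ` D"] card_image_le[OF assms, of a]
      card_image_le[OF assms, of b] by linarith
  define cell where "cell = (\<lambda>(L, L'). {i\<in>D. a i \<in> L' \<and> b i \<notin> L})"
  have cells: "{i\<in>D. x \<in> {a i..b i}} = cell (cut_position X x)" for x
    by (auto simp: cell_def cut_position_def X_def not_less)
  then have "card (range (\<lambda>x. {i\<in>D. x \<in> {a i..b i}})) = card (cell ` range (cut_position X))"
    by (simp only: cells image_image)
  also have "\<dots> \<le> card (range (cut_position X))"
    by (rule card_image_le[OF finite_range_cut_position[OF \<open>finite X\<close>]])
  also have "\<dots> \<le> 4 * card D + 1"
    using card_range_cut_position[OF \<open>finite X\<close>] card_X by linarith
  finally show ?thesis .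
qed

lemma card_rectangle_cells:
  assumes "finite D" "\<forall>r\<in>D. axis_rect r"
  shows "card (range (\<lambda>p::pt. {r\<in>D. p \<in> r})) \<le> (4 * card D + 1)\<^sup>2"
proof -
  obtain A B C E where rect: "\<And>r. r \<in> D \<Longrightarrow> r = {A r..B r} \<times> {C r..E r}"
    using assms(2) unfolding axis_rect_def by metis
  define Cx where "Cx = range (\<lambda>x. {r\<in>D. x \<in> {A r..B r}})"
  define Cy where "Cy = range (\<lambda>y. {r\<in>D. y \<in> {C r..E r}})"
  have fin: "finite Cx" "finite Cy"
    using finite_subset[of Cx "Pow D"] finite_subset[of Cy "Pow D"] assms(1)
    unfolding Cx_def Cy_def by auto
  have "p \<in> r \<longleftrightarrow> fst p \<in> {A r..B r} \<and> snd p \<in> {C r..E r}" if "r \<in> D" for p :: pt and r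
  proof -
    have "p \<in> {A r..B r} \<times> {C r..E r} \<longleftrightarrow> fst p \<in> {A r..B r} \<and> snd p \<in> {C r..E r}"
      by (rule mem_Times_iff)
    then show ?thesis
      by (simp only: rect[OF that, symmetric])
  qed
  then have "{r\<in>D. p \<in> r} = {r\<in>D. fst p \<in> {A r..B r}} \<inter> {r\<in>D. snd p \<in> {C r..E r}}" for p :: pt
    by blast
  then have "range (\<lambda>p::pt. {r\<in>D. p \<in> r}) \<subseteq> (\<lambda>(S, T). S \<inter> T) ` (Cx \<times> Cy)"
    unfolding Cx_def Cy_def by auto
  then have "card (range (\<lambda>p::pt. {r\<in>D. p \<in> r})) \<le> card ((\<lambda>(S, T). S \<inter> T) ` (Cx \<times> Cy))"
    by (rule card_mono[rotated]) (simp add: fin)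
  also have "\<dots> \<le> card (Cx \<times> Cy)"
    by (rule card_image_le) (simp add: fin)
  also have "\<dots> = card Cx * card Cy"
    by (rule card_cartesian_product)
  also have "\<dots> \<le> (4 * card D + 1) * (4 * card D + 1)"
    unfolding Cx_def Cy_def using card_interval_cells[OF assms(1)] by (intro mult_mono) auto
  finally show ?thesis
    by (simp add: power2_eq_square)
qed

lemma top_choice_sum_bound:
  fixes w :: "'a \<Rightarrow> nat"
  assumes "finite F" "Gs \<subseteq> F" "card Gs = min \<alpha> (card F)"
    and heaviest: "\<forall>G\<in>Gs. \<forall>H\<in>F - Gs. w H \<le> w G"
    and "Hs \<subseteq> F" "card Hs \<le> N"
  shows "\<alpha> * sum w Hs \<le> (\<alpha> + N) * sum w Gs"
proof -
  have "finite Gs" "finite Hs"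
    using assms(1,2,5) finite_subset by auto
  have inside: "sum w (Hs \<inter> Gs) \<le> sum w Gs"
    using \<open>finite Gs\<close> by (intro sum_mono2) auto
  have outside: "\<alpha> * sum w (Hs - Gs) \<le> N * sum w Gs"
  proof (cases "Hs - Gs = {}")
    case True
    then show ?thesis by (simp add: True)
  next
    case False
    then have "Gs \<subset> F"
      using assms(2,5) by auto
    then have "card Gs = \<alpha>"
      using psubset_card_mono[OF assms(1) \<open>Gs \<subset> F\<close>] assms(3) by linarith
    then have "\<alpha> * sum w (Hs - Gs) = (\<Sum>G\<in>Gs. sum w (Hs - Gs))"
      by simp
    also have "\<dots> \<le> (\<Sum>G\<in>Gs. card (Hs - Gs) * w G)"
    proof (rule sum_mono)
      fix G assume "G \<in> Gs"
      then show "sum w (Hs - Gs) \<le> card (Hs - Gs) * w G"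
        using heaviest assms(5) sum_bounded_above[of "Hs - Gs" w "w G"] by auto
    qed
    also have "\<dots> \<le> (\<Sum>G\<in>Gs. N * w G)"
      using card_mono[OF \<open>finite Hs\<close>, of "Hs - Gs"] assms(6)
      by (intro sum_mono mult_right_mono) auto
    also have "\<dots> = N * sum w Gs"
      by (simp add: sum_distrib_left)
    finally show ?thesis .
  qed
  have "\<alpha> * sum w Hs = \<alpha> * sum w (Hs \<inter> Gs) + \<alpha> * sum w (Hs - Gs)"
    using sum.Int_Diff[OF \<open>finite Hs\<close>, of w Gs] by (simp add: distrib_left)
  also have "\<dots> \<le> \<alpha> * sum w Gs + N * sum w Gs"
    using inside outside by (intro add_mono mult_left_mono) auto
  finally show ?thesis
    by (simp add: distrib_right)
qed

lemma finite_groups: "finite P \<Longrightarrow> finite (groups R P k)"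
  by (simp add: groups_def surviving_def)

lemma groups_subset: "G \<in> groups R P k \<Longrightarrow> G \<subseteq> P"
  by (auto simp: groups_def surviving_def)

lemma card_ranges_at_group:
  assumes "finite R" "G \<in> groups R P k"
  shows "card (\<Union>p\<in>G. ranges_at R p) \<le> k"
proof -
  obtain p where p: "p \<in> surviving R P k"
    and G: "G = {q \<in> surviving R P k. ranges_at R q = ranges_at R p}"
    using assms(2) unfolding groups_def by blast
  have "(\<Union>q\<in>G. ranges_at R q) \<subseteq> ranges_at R p"
    using G by auto
  then have "card (\<Union>q\<in>G. ranges_at R q) \<le> card (ranges_at R p)"
    using assms(1) by (intro card_mono) (auto simp: ranges_at_def)
  also have "\<dots> \<le> k"
    using p by (simp add: surviving_def)
  finally show ?thesis .
qed

lemma card_greedy_deleted: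
  assumes "finite P" "finite R" "greedy_choice R P k \<alpha> Gs"
  shows "card (greedy_deleted R Gs) \<le> \<alpha> * k"
proof -
  have Gs: "Gs \<subseteq> groups R P k" "card Gs \<le> \<alpha>"
    using assms(3) by (auto simp: greedy_choice_def)
  then have "finite Gs"
    using finite_groups[OF assms(1)] finite_subset by blast
  have "card (greedy_deleted R Gs) \<le> (\<Sum>G\<in>Gs. card (\<Union>p\<in>G. ranges_at R p))"
    unfolding greedy_deleted_def using \<open>finite Gs\<close> by (rule card_UN_le)
  also have "\<dots> \<le> card Gs * k"
    using card_ranges_at_group[OF assms(2)] Gs(1)
      sum_bounded_above[of Gs "\<lambda>G. card (\<Union>p\<in>G. ranges_at R p)" k] by auto
  also have "\<dots> \<le> \<alpha> * k"
    using Gs(2) by simp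
  finally show ?thesis .
qed

lemma exposed_greedy_deleted: "\<forall>p\<in>\<Union>Gs. exposed (R - greedy_deleted R Gs) p"
  by (auto simp: exposed_def greedy_deleted_def ranges_at_def)

lemma max_exposed_attained:
  assumes "finite R"
  obtains D where "D \<subseteq> R" "card D \<le> k" "max_exposed R P k = card {p \<in> P. exposed (R - D) p}"
proof -
  let ?M = "{card {p \<in> P. exposed (R - D) p} | D. D \<subseteq> R \<and> card D \<le> k}"
  have "?M \<subseteq> (\<lambda>D. card {p \<in> P. exposed (R - D) p}) ` Pow R"
    by blast
  then have "finite ?M"
    using assms by (meson finite_Pow_iff finite_imageI finite_subset)
  moreover have "card {p \<in> P. exposed (R - {}) p} \<in> ?M"
    by force
  ultimately have "max_exposed R P k \<in> ?M"
    unfolding max_exposed_def by (intro Max_in) auto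
  then show ?thesis
    using that by blast
qed

lemma exposed_covered_by_few_groups:
  assumes "\<forall>r\<in>R. axis_rect r" "D \<subseteq> R" "finite D" "card D \<le> k"
  obtains Hs where "Hs \<subseteq> groups R P k" "card Hs \<le> (4 * k + 1)\<^sup>2"
    "{p \<in> P. exposed (R - D) p} \<subseteq> \<Union>Hs"
proof -
  define E where "E = {p \<in> P. exposed (R - D) p}"
  define cls where "cls A = {q \<in> surviving R P k. ranges_at R q = A}" for A
  have ranges: "ranges_at R p = {r\<in>D. p \<in> r}" if "p \<in> E" for p
    using that assms(2) by (auto simp: E_def exposed_def ranges_at_def)
  have surviving: "E \<subseteq> surviving R P k"
  proof
    fix p assume "p \<in> E"
    have "card {r\<in>D. p \<in> r} \<le> card D"
      using assms(3) by (intro card_mono) auto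
    then show "p \<in> surviving R P k"
      using \<open>p \<in> E\<close> ranges assms(4) by (auto simp: surviving_def E_def)
  qed
  define Hs where "Hs = (\<lambda>p. cls (ranges_at R p)) ` E"
  have "Hs \<subseteq> groups R P k"
    using surviving by (auto simp: Hs_def cls_def groups_def)
  moreover have "E \<subseteq> \<Union>Hs"
    using surviving by (auto simp: Hs_def cls_def)
  moreover have "card Hs \<le> (4 * k + 1)\<^sup>2"
  proof -
    have fin: "finite (range (\<lambda>p::pt. {r\<in>D. p \<in> r}))"
      by (rule finite_subset[of _ "Pow D"]) (use assms(3) in auto)
    have "Hs = cls ` (\<lambda>p. {r\<in>D. p \<in> r}) ` E"
      using ranges by (auto simp: Hs_def image_image)
    also have "card \<dots> \<le> card ((\<lambda>p. {r\<in>D. p \<in> r}) ` E)"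
      by (rule card_image_le) (rule finite_subset[OF _ fin], auto)
    also have "\<dots> \<le> card (range (\<lambda>p::pt. {r\<in>D. p \<in> r}))"
      by (rule card_mono[OF fin]) auto
    also have "\<dots> \<le> (4 * card D + 1)\<^sup>2"
      using card_rectangle_cells assms(1-3) by blast
    also have "\<dots> \<le> (4 * k + 1)\<^sup>2"
      using assms(4) by simp
    finally show ?thesis .
  qed
  ultimately show ?thesis
    using that unfolding E_def by blast
qed

lemma greedy_value_bound:
  assumes "finite P" "finite R" "\<forall>r\<in>R. axis_rect r" "greedy_choice R P k \<alpha> Gs"
  shows "\<alpha> * max_exposed R P k \<le> (\<alpha> + (4 * k + 1)\<^sup>2) * greedy_value Gs"
proof -
  obtain D where D: "D \<subseteq> R" "card D \<le> k"
    and opt: "max_exposed R P k = card {p \<in> P. exposed (R - D) p}"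
    using max_exposed_attained[OF assms(2)] .
  obtain Hs where Hs: "Hs \<subseteq> groups R P k" "card Hs \<le> (4 * k + 1)\<^sup>2"
    and cover: "{p \<in> P. exposed (R - D) p} \<subseteq> \<Union>Hs"
    using exposed_covered_by_few_groups[OF assms(3) D(1) finite_subset[OF D(1) assms(2)] D(2)] .
  have "\<Union>Hs \<subseteq> P"
    using Hs(1) groups_subset by blast
  then have "finite (\<Union>Hs)"
    using assms(1) finite_subset by blast
  then have "max_exposed R P k \<le> card (\<Union>Hs)"
    unfolding opt using cover by (rule card_mono)
  also have "\<dots> \<le> sum card Hs"
    by (rule card_Union_le_sum_card)
  finally have "\<alpha> * max_exposed R P k \<le> \<alpha> * sum card Hs"
    by simp
  also have "\<dots> \<le> (\<alpha> + (4 * k + 1)\<^sup>2) * greedy_value Gs"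
    using assms(4) finite_groups[OF assms(1)] Hs unfolding greedy_choice_def greedy_value_def
    by (intro top_choice_sum_bound) auto
  finally show ?thesis .
qed

theorem mainTheorem6:
  shows "\<exists>c::real. c > 0 \<and>
    (\<forall>(P::pt set) (R::pt set set) (k::nat) (\<alpha>::nat) (Gs::pt set set).
       finite P \<and> finite R \<and> (\<forall>r\<in>R. axis_rect r) \<and> 1 \<le> k \<and> 1 \<le> \<alpha> \<and> \<alpha> \<le> k \<and>
       greedy_choice R P k \<alpha> Gs \<longrightarrow>
         real \<alpha> * real (max_exposed R P k) / (c * real k ^ 2) \<le> real (greedy_value Gs) \<and>
         card (greedy_deleted R Gs) \<le> \<alpha> * k \<and>
         (\<forall>p\<in>\<Union>Gs. exposed (R - greedy_deleted R Gs) p))"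
proof (intro exI[of _ 26] conjI allI impI)
  fix P R k \<alpha> and Gs :: "pt set set"
  assume "finite P \<and> finite R \<and> (\<forall>r\<in>R. axis_rect r) \<and> 1 \<le> k \<and> 1 \<le> \<alpha> \<and> \<alpha> \<le> k \<and>
    greedy_choice R P k \<alpha> Gs"
  then have P: "finite P" and R: "finite R" "\<forall>r\<in>R. axis_rect r"
    and k: "1 \<le> k" "\<alpha> \<le> k" and greedy: "greedy_choice R P k \<alpha> Gs"
    by auto
  show "card (greedy_deleted R Gs) \<le> \<alpha> * k"
    using card_greedy_deleted[OF P R(1) greedy] .
  show "\<forall>p\<in>\<Union>Gs. exposed (R - greedy_deleted R Gs) p"
    by (rule exposed_greedy_deleted)
  have "k \<le> k\<^sup>2"
    using k(1) by (simp add: power2_eq_square)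
  moreover have "(4 * k + 1)\<^sup>2 = 16 * k\<^sup>2 + 8 * k + 1"
    by (simp only: power2_eq_square) algebra
  ultimately have "\<alpha> + (4 * k + 1)\<^sup>2 \<le> 26 * k\<^sup>2"
    using k by linarith
  then have "(\<alpha> + (4 * k + 1)\<^sup>2) * greedy_value Gs \<le> 26 * k\<^sup>2 * greedy_value Gs"
    by (rule mult_right_mono) simp
  with greedy_value_bound[OF P R greedy]
  have "\<alpha> * max_exposed R P k \<le> 26 * k\<^sup>2 * greedy_value Gs"
    by (rule le_trans)
  then have "real \<alpha> * real (max_exposed R P k) \<le> 26 * real k ^ 2 * real (greedy_value Gs)"
    using of_nat_mono by fastforce
  then show "real \<alpha> * real (max_exposed R P k) / (26 * real k ^ 2) \<le> real (greedy_value Gs)"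
    using k(1) by (simp add: divide_le_eq mult.commute)
qed simp

end
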